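(* For any feasible solution $(f,x_1^*,\dots,x_n^* )$ of the reward-design problem, there exists a feasible solution $(f,x_1',\dots,x_n')$ (with the same $f$) such that $x_1'\le x_2'\le\cdots\le x_n'$ and $\sum_{i=1}^n x_i'\ge\sum_{i=1}^n x_i^*$.
   Context: There are $n$ agents with types $0<q_1\le q_2\le\cdots\le q_n$, a cost constant $C>0$ and a budget $B>0$. A reward function is a map $f:[0,\infty)\to[0,\infty)$; agent $i$'s utility for producing quality $x$ is $u_i(x)=f(x)-xC/q_i$. A tuple $(f,x_1^*,\dots,x_n^* )$ is a feasible solution of the reward-design problem if for each $i$: $0\le x_i^*\le q_i$ and $u_i(x_i^* )\ge u_i(x)$ for all $x\in[0,q_i]$, and moreover $\sum_{i=1}^n f(x_i^* )\le B$. The objective is to maximize $\sum_i x_i^*$. *)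

theory Defs
  imports Complex_Main
begin

text \<open>Agents are indexed by 1..n; types q i, cost constant C, budget B.
  A reward function f maps [0,inf) to [0,inf); we model it as real => real
  required to be nonnegative on [0,inf).\<close>

definition utility :: "(real \<Rightarrow> real) \<Rightarrow> real \<Rightarrow> real \<Rightarrow> real \<Rightarrow> real" where
  "utility f C qi x = f x - x * C / qi"

definition reward_fun :: "(real \<Rightarrow> real) \<Rightarrow> bool" where
  "reward_fun f \<longleftrightarrow> (\<forall>x\<ge>0. f x \<ge> 0)"

definition feasible ::
  "nat \<Rightarrow> (nat \<Rightarrow> real) \<Rightarrow> real \<Rightarrow> real \<Rightarrow> (real \<Rightarrow> real) \<Rightarrow> (nat \<Rightarrow> real) \<Rightarrow> bool" where
  "feasible n q C B f xs \<longleftrightarrow>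
     reward_fun f \<and>
     (\<forall>i\<in>{1..n}. 0 \<le> xs i \<and> xs i \<le> q i \<and>
        (\<forall>x. 0 \<le> x \<and> x \<le> q i \<longrightarrow> utility f C (q i) (xs i) \<ge> utility f C (q i) x)) \<and>
     (\<Sum>i=1..n. f (xs i)) \<le> B"

end

theory Submission
  imports Defs "HOL-Combinatorics.Permutations"
begin

text \<open>Best responses are monotone in the type (single crossing): an agent of strictly
  higher type never produces less. Hence if two agents i < j produce x i > x j, they
  have the same type, so exchanging their outputs keeps both at a best response and
  changes neither the total reward nor the total quality. Repeatedly moving the largest
  output to the last position therefore sorts the profile.\<close>

definition best_response :: "(real \<Rightarrow> real) \<Rightarrow> real \<Rightarrow> real \<Rightarrow> real \<Rightarrow> bool" where
  "best_response f C qi x \<longleftrightarrow> 0 \<le> x \<and> x \<le> qi \<and>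
     (\<forall>y. 0 \<le> y \<and> y \<le> qi \<longrightarrow> utility f C qi y \<le> utility f C qi x)"

lemma feasible_iff_best_response:
  "feasible n q C B f xs \<longleftrightarrow>
     reward_fun f \<and> (\<forall>i\<in>{1..n}. best_response f C (q i) (xs i)) \<and> (\<Sum>i=1..n. f (xs i)) \<le> B"
  unfolding feasible_def best_response_def by blast

lemma best_response_mono:
  assumes C: "0 < C" and qi: "0 < qi" and lt: "qi < qj"
    and a: "best_response f C qi a" and b: "best_response f C qj b"
  shows "a \<le> b"
proof (cases "b \<le> qi")
  case False
  then show ?thesis using a unfolding best_response_def by auto
next
  case True
  have qj: "0 < qj" using qi lt by simp
  have "f b - b * C / qi \<le> f a - a * C / qi"
    using a b True unfolding best_response_def utility_def by auto
  moreover have "f a - a * C / qj \<le> f b - b * C / qj"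
    using a b lt unfolding best_response_def utility_def by auto
  moreover have "(b - a) * (C / qi - C / qj) = (b * C / qi - a * C / qi) - (b * C / qj - a * C / qj)"
    using qi qj by (simp add: field_simps)
  ultimately have "0 \<le> (b - a) * (C / qi - C / qj)" by linarith
  moreover have "0 < C / qi - C / qj" using C qi lt by (simp add: frac_less2)
  ultimately show ?thesis by (simp add: zero_le_mult_iff)
qed

lemma exists_sorting_permutation:
  fixes x :: "nat \<Rightarrow> 'a::linorder"
  assumes "\<And>i j a b. 1 \<le> i \<Longrightarrow> i < j \<Longrightarrow> j \<le> n \<Longrightarrow> P i a \<Longrightarrow> P j b \<Longrightarrow> b < a
      \<Longrightarrow> P i b \<and> P j a"
    and "\<forall>i\<in>{1..n}. P i (x i)"
  shows "\<exists>\<sigma>. \<sigma> permutes {1..n} \<and> (\<forall>i\<in>{1..n}. P i (x (\<sigma> i))) \<and>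
           (\<forall>i j. 1 \<le> i \<and> i \<le> j \<and> j \<le> n \<longrightarrow> x (\<sigma> i) \<le> x (\<sigma> j))"
  using assms
proof (induction n arbitrary: x)
  case 0
  show ?case by (intro exI[of _ id]) (auto simp: permutes_id)
next
  case (Suc n)
  have "Max (x ` {1..Suc n}) \<in> x ` {1..Suc n}" by (intro Max_in) auto
  then obtain k where k: "k \<in> {1..Suc n}" and k_max: "\<And>j. j \<in> {1..Suc n} \<Longrightarrow> x j \<le> x k"
    by (metis Max_ge finite_atLeastAtMost finite_imageI image_eqI imageE)
  define \<tau> where "\<tau> = transpose k (Suc n)"
  have swapped: "P k (x (Suc n)) \<and> P (Suc n) (x k)"
  proof (cases "x (Suc n) < x k")
    case True
    then have "k < Suc n" using k by (cases "k = Suc n") auto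
    then show ?thesis using True k Suc.prems by (intro Suc.prems(1)) auto
  next
    case False
    then have "x (Suc n) = x k" using k_max[of "Suc n"] by simp
    moreover have "P k (x k)" "P (Suc n) (x (Suc n))" using k Suc.prems(2) by auto
    ultimately show ?thesis by simp
  qed
  have swap_admissible: "P i ((x \<circ> \<tau>) i)" if "i \<in> {1..Suc n}" for i
    using Suc.prems(2) swapped that by (cases "i = k \<or> i = Suc n") (auto simp: \<tau>_def)
  have exchange: "P i b \<and> P j a"
    if "1 \<le> i" "i < j" "j \<le> n" "P i a" "P j b" "b < a" for i j a b
    using that by (intro Suc.prems(1)) auto
  obtain \<rho> where \<rho>: "\<rho> permutes {1..n}" and \<rho>_admissible: "\<forall>i\<in>{1..n}. P i ((x \<circ> \<tau>) (\<rho> i))"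
    and \<rho>_sorted: "\<forall>i j. 1 \<le> i \<and> i \<le> j \<and> j \<le> n \<longrightarrow> (x \<circ> \<tau>) (\<rho> i) \<le> (x \<circ> \<tau>) (\<rho> j)"
    using Suc.IH[OF exchange, of "x \<circ> \<tau>"] swap_admissible by auto
  have \<rho>_last: "\<rho> (Suc n) = Suc n" using \<rho> by (simp add: permutes_not_in)
  have \<rho>_Suc: "\<rho> permutes {1..Suc n}" using \<rho> by (rule permutes_subset) auto
  have last_max: "(x \<circ> \<tau>) (\<rho> i) \<le> (x \<circ> \<tau>) (\<rho> (Suc n))" if "i \<in> {1..Suc n}" for i
  proof -
    have "\<rho> i \<in> {1..Suc n}"
      using permutes_in_image[OF \<rho>_Suc] that by simp
    then have "\<tau> (\<rho> i) \<in> {1..Suc n}" using k by (auto simp: \<tau>_def transpose_def)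
    then show ?thesis using k_max \<rho>_last by (simp add: \<tau>_def)
  qed
  show ?case
  proof (intro exI[of _ "\<tau> \<circ> \<rho>"] conjI)
    show "\<tau> \<circ> \<rho> permutes {1..Suc n}"
      using k by (intro permutes_compose \<rho>_Suc) (auto simp: \<tau>_def permutes_swap_id)
    show "\<forall>i\<in>{1..Suc n}. P i (x ((\<tau> \<circ> \<rho>) i))"
      using \<rho>_admissible swap_admissible[of "Suc n", simplified] \<rho>_last by (auto simp: le_Suc_eq)
    show "\<forall>i j. 1 \<le> i \<and> i \<le> j \<and> j \<le> Suc n \<longrightarrow> x ((\<tau> \<circ> \<rho>) i) \<le> x ((\<tau> \<circ> \<rho>) j)"
      using \<rho>_sorted last_max by (auto simp: le_Suc_eq)
  qed
qed

theorem lemma1: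
  fixes n :: nat and q :: "nat \<Rightarrow> real" and C B :: real
    and f :: "real \<Rightarrow> real" and xs :: "nat \<Rightarrow> real"
  assumes q_pos: "\<forall>i\<in>{1..n}. 0 < q i"
    and q_mono: "\<forall>i j. 1 \<le> i \<and> i \<le> j \<and> j \<le> n \<longrightarrow> q i \<le> q j"
    and C_pos: "0 < C" and B_pos: "0 < B"
    and feas: "feasible n q C B f xs"
  shows "\<exists>xs'. feasible n q C B f xs' \<and>
           (\<forall>i j. 1 \<le> i \<and> i \<le> j \<and> j \<le> n \<longrightarrow> xs' i \<le> xs' j) \<and>
           (\<Sum>i=1..n. xs' i) \<ge> (\<Sum>i=1..n. xs i)"
proof -
  have exchange: "best_response f C (q i) b \<and> best_response f C (q j) a"
    if "1 \<le> i" "i < j" "j \<le> n" "best_response f C (q i) a" "best_response f C (q j) b" "b < a"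
    for i j a b
  proof -
    have "\<not> q i < q j"
    proof
      assume "q i < q j"
      moreover have "0 < q i" using q_pos that(1-3) by simp
      ultimately have "a \<le> b" by (rule best_response_mono[OF C_pos _ _ that(4,5), rotated])
      then show False using \<open>b < a\<close> by simp
    qed
    moreover have "q i \<le> q j" using q_mono that(1-3) by auto
    ultimately have "q i = q j" by simp
    then show ?thesis using that by simp
  qed
  obtain \<sigma> where \<sigma>: "\<sigma> permutes {1..n}"
    and best: "\<forall>i\<in>{1..n}. best_response f C (q i) (xs (\<sigma> i))"
    and sorted: "\<forall>i j. 1 \<le> i \<and> i \<le> j \<and> j \<le> n \<longrightarrow> xs (\<sigma> i) \<le> xs (\<sigma> j)"
    using exists_sorting_permutation[where P = "\<lambda>i. best_response f C (q i)" and x = xs and n = n, OF exchange] feas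
    by (auto simp: feasible_iff_best_response)
  have "(\<Sum>i=1..n. f ((xs \<circ> \<sigma>) i)) = (\<Sum>i=1..n. f (xs i))"
    using sum.permute[OF \<sigma>, of "\<lambda>i. f (xs i)"] by (simp add: comp_def)
  moreover have "(\<Sum>i=1..n. (xs \<circ> \<sigma>) i) = (\<Sum>i=1..n. xs i)"
    using sum.permute[OF \<sigma>, of xs] by simp
  ultimately show ?thesis
    using feas best sorted by (intro exI[of _ "xs \<circ> \<sigma>"]) (auto simp: feasible_iff_best_response)
qed

end
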